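(* Let $\frac{1}{2}< \alpha <1$ and let $G$ be a graph with $n$ vertices and $m$ edges having no isolated vertices. If $1\leq k\leq n-1$, then $$S_{k}(A_{\alpha}(G))\leq 2\alpha m-(n-k)\left(\frac{\det(A_{\alpha}(G))}{\lambda_1(A_{\alpha}(G))\,\lambda_2^{k-1}(A_{\alpha}(G))}\right)^{\frac{1}{n-k}},$$ with equality if and only if $\lambda_2(A_{\alpha}(G))=\cdots=\lambda_k(A_{\alpha}(G))$ and $\lambda_{k+1}(A_{\alpha}(G))=\cdots=\lambda_n(A_{\alpha}(G))$.
   Context: All graphs are simple and undirected. $A_{\alpha}(G)=\alpha D(G)+(1-\alpha)A(G)$, where $A(G)$ is the adjacency matrix and $D(G)$ the diagonal matrix of vertex degrees. $\lambda_1(M)\geq\cdots\geq\lambda_n(M)$ denote the eigenvalues of a real symmetric matrix $M$, and $S_k(M)=\sum_{i=1}^k\lambda_i(M)$. *)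

theory Defs
  imports "Jordan_Normal_Form.Determinant" "Jordan_Normal_Form.Char_Poly"
begin

definition simple_graph :: "nat \<Rightarrow> (nat \<Rightarrow> nat \<Rightarrow> bool) \<Rightarrow> bool" where
  "simple_graph n E \<longleftrightarrow> (\<forall>i<n. \<forall>j<n. E i j \<longleftrightarrow> E j i) \<and> (\<forall>i<n. \<not> E i i)"

definition num_edges :: "nat \<Rightarrow> (nat \<Rightarrow> nat \<Rightarrow> bool) \<Rightarrow> nat" where
  "num_edges n E = card {(i, j). i < j \<and> j < n \<and> E i j}"

definition degree :: "nat \<Rightarrow> (nat \<Rightarrow> nat \<Rightarrow> bool) \<Rightarrow> nat \<Rightarrow> nat" where
  "degree n E i = card {j. j < n \<and> E i j}"

definition no_isolated :: "nat \<Rightarrow> (nat \<Rightarrow> nat \<Rightarrow> bool) \<Rightarrow> bool" where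
  "no_isolated n E \<longleftrightarrow> (\<forall>i<n. \<exists>j<n. E i j)"

definition adj_matrix :: "nat \<Rightarrow> (nat \<Rightarrow> nat \<Rightarrow> bool) \<Rightarrow> real mat" where
  "adj_matrix n E = mat n n (\<lambda>(i, j). if E i j then 1 else 0)"

definition deg_matrix :: "nat \<Rightarrow> (nat \<Rightarrow> nat \<Rightarrow> bool) \<Rightarrow> real mat" where
  "deg_matrix n E = mat n n (\<lambda>(i, j). if i = j then real (degree n E i) else 0)"

definition A_alpha :: "real \<Rightarrow> nat \<Rightarrow> (nat \<Rightarrow> nat \<Rightarrow> bool) \<Rightarrow> real mat" where
  "A_alpha \<alpha> n E = \<alpha> \<cdot>\<^sub>m deg_matrix n E + (1 - \<alpha>) \<cdot>\<^sub>m adj_matrix n E"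

text \<open>Eigenvalues (with multiplicity) of a real matrix whose characteristic polynomial
  splits over the reals (e.g. real symmetric matrices), listed in non-increasing order:
  eigs M ! (i-1) is lambda_i(M).\<close>
definition eigs :: "real mat \<Rightarrow> real list" where
  "eigs M = (THE xs. sorted_wrt (\<ge>) xs \<and> length xs = dim_row M \<and>
                      char_poly M = (\<Prod>x\<leftarrow>xs. [:- x, 1:]))"

definition S_k :: "nat \<Rightarrow> real mat \<Rightarrow> real" where
  "S_k k M = sum_list (take k (eigs M))"

end

theory Submission
  imports Defs "HOL-Analysis.Convex" "Jordan_Normal_Form.Schur_Decomposition"
begin

(* The quadratic form of A_alpha(G) is alpha x'Dx + (1 - alpha) x'Ax >= (2 alpha - 1) x'Dx
   >= (2 alpha - 1) |x|^2, because the signless Laplacian D + A is positive semidefinite and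
   every degree is at least 1. So the symmetric matrix A_alpha(G) has real positive eigenvalues
   lambda_1 >= ... >= lambda_n, with product det A_alpha(G) and sum tr A_alpha(G) = 2 alpha m,
   and S_k = 2 alpha m - (lambda_(k+1) + ... + lambda_n). As lambda_i <= lambda_2 for
   2 <= i <= k, the quotient det / (lambda_1 lambda_2^(k-1)) is at most
   lambda_(k+1) ... lambda_n, whose (n-k)-th root is at most the mean of
   lambda_(k+1), ..., lambda_n by AM-GM. Equality holds iff both estimates are sharp. *)

section \<open>Determinant and trace of a matrix with split characteristic polynomial\<close>

definition trace_mat :: "'a::comm_ring_1 mat \<Rightarrow> 'a" where
  "trace_mat A = (\<Sum>i<dim_row A. A $$ (i, i))"

lemma trace_mat_mult_comm:
  assumes "A \<in> carrier_mat n m" "B \<in> carrier_mat m n"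
  shows "trace_mat (A * B) = trace_mat (B * A)"
proof -
  have "trace_mat (A * B) = (\<Sum>i<n. \<Sum>j<m. A $$ (i, j) * B $$ (j, i))"
    using assms by (simp add: trace_mat_def scalar_prod_def lessThan_atLeast0)
  also have "\<dots> = (\<Sum>j<m. \<Sum>i<n. B $$ (j, i) * A $$ (i, j))"
    by (subst sum.swap) (simp add: mult.commute)
  also have "\<dots> = trace_mat (B * A)"
    using assms by (simp add: trace_mat_def scalar_prod_def lessThan_atLeast0)
  finally show ?thesis .
qed

lemma trace_mat_similar:
  assumes "similar_mat A B"
  shows "trace_mat A = trace_mat B"
proof -
  from similar_matD[OF assms] obtain n P Q where
    carrier: "{A, B, P, Q} \<subseteq> carrier_mat n n" and "Q * P = 1\<^sub>m n" and "A = P * B * Q"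
    by blast
  then have "trace_mat A = trace_mat (P * (B * Q))"
    by (simp add: assoc_mult_mat[of P n n B n Q n])
  also have "\<dots> = trace_mat ((B * Q) * P)"
    using carrier by (intro trace_mat_mult_comm) auto
  also have "(B * Q) * P = B"
    using carrier \<open>Q * P = 1\<^sub>m n\<close> by (auto simp: assoc_mult_mat[of B n n Q n P n])
  finally show ?thesis .
qed

lemma det_trace_if_char_poly_splits:
  fixes A :: "'a::conjugatable_ordered_field mat"
  assumes A: "A \<in> carrier_mat n n" and split: "char_poly A = (\<Prod>a\<leftarrow>es. [:- a, 1:])"
  shows "det A = prod_list es \<and> trace_mat A = sum_list es"
proof -
  obtain B P Q where "schur_decomposition A es = (B, P, Q)"
    by (metis prod_cases3)
  from schur_decomposition[OF A split this]
  have sim: "similar_mat_wit A B P Q" and ut: "upper_triangular B" and diag: "diag_mat B = es"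
    by blast+
  have B: "B \<in> carrier_mat n n"
    using similar_mat_witD2[OF A sim] by blast
  have "similar_mat A B"
    using sim unfolding similar_mat_def by blast
  then have "det A = det B" "trace_mat A = trace_mat B"
    by (simp_all add: det_similar trace_mat_similar)
  moreover have "det B = prod_list es"
    using det_upper_triangular[OF ut B] diag by simp
  moreover have "trace_mat B = sum_list (diag_mat B)"
    using B by (simp add: trace_mat_def diag_mat_def sum_list_sum_nth lessThan_atLeast0)
  ultimately show ?thesis
    using diag by simp
qed

lemma mset_eq_if_linear_factors_eq:
  fixes xs ys :: "'a::idom list"
  assumes "(\<Prod>x\<leftarrow>xs. [:- x, 1:]) = (\<Prod>y\<leftarrow>ys. [:- y, 1:])"
  shows "mset xs = mset ys"
  using assms
proof (induction xs arbitrary: ys)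
  case Nil
  then have "length ys = 0"
    using degree_linear_factors[of uminus ys] by simp
  then show ?case by simp
next
  case (Cons x xs)
  have "poly (\<Prod>y\<leftarrow>ys. [:- y, 1:]) x = 0"
    using Cons.prems[symmetric] by (simp add: poly_prod_list)
  then have "x \<in> set ys"
    by (auto simp: poly_prod_list)
  then have ys: "mset ys = add_mset x (mset (remove1 x ys))"
    by simp
  have "[:- x, 1:] * (\<Prod>x\<leftarrow>xs. [:- x, 1:]) = (\<Prod>y\<leftarrow>ys. [:- y, 1:])"
    by (simp only: Cons.prems[symmetric] list.map prod_list.Cons)
  also have "\<dots> = prod_mset (image_mset (\<lambda>y. [:- y, 1:]) (mset ys))"
    by (metis mset_map prod_mset_prod_list)
  also have "\<dots> = [:- x, 1:] * (\<Prod>y\<leftarrow>remove1 x ys. [:- y, 1:])"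
    unfolding ys image_mset_add_mset prod_mset.add_mset mset_map[symmetric] prod_mset_prod_list ..
  finally have "(\<Prod>x\<leftarrow>xs. [:- x, 1:]) = (\<Prod>y\<leftarrow>remove1 x ys. [:- y, 1:])"
    by (rule mult_left_cancel[THEN iffD1, rotated]) simp
  then show ?case
    using Cons.IH ys by simp
qed

lemma eigs_eq_rev_sort:
  fixes M :: "real mat"
  assumes M: "M \<in> carrier_mat n n" and split: "char_poly M = (\<Prod>r\<leftarrow>rs. [:- r, 1:])"
  shows "eigs M = rev (sort rs)"
  unfolding eigs_def
proof (rule the_equality)
  have "length rs = n"
    using degree_monic_char_poly[OF M] degree_linear_factors[of uminus rs] split by simp
  moreover have "(\<Prod>r\<leftarrow>rev (sort rs). [:- r, 1:]) = (\<Prod>r\<leftarrow>rs. [:- r, 1:])"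
    unfolding prod_mset_prod_list[symmetric] mset_map mset_rev mset_sort ..
  ultimately show "sorted_wrt (\<ge>) (rev (sort rs)) \<and> length (rev (sort rs)) = dim_row M \<and>
      char_poly M = (\<Prod>r\<leftarrow>rev (sort rs). [:- r, 1:])"
    using M split by (simp add: sorted_wrt_rev)
next
  fix xs
  assume xs: "sorted_wrt (\<ge>) xs \<and> length xs = dim_row M \<and> char_poly M = (\<Prod>r\<leftarrow>xs. [:- r, 1:])"
  then have "mset (rev xs) = mset rs"
    using split mset_eq_if_linear_factors_eq by fastforce
  moreover have "sorted (rev xs)"
    using xs by (simp add: sorted_wrt_rev)
  ultimately show "xs = rev (sort rs)"
    by (metis properties_for_sort rev_rev_ident)
qed

section \<open>Real symmetric matrices\<close>

definition quad_form :: "real mat \<Rightarrow> (nat \<Rightarrow> real) \<Rightarrow> real" where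
  "quad_form M x = (\<Sum>i<dim_row M. \<Sum>j<dim_row M. M $$ (i, j) * x i * x j)"

lemma hermitian_form_real_symmetric:
  fixes M :: "real mat" and v :: "nat \<Rightarrow> complex"
  assumes M: "M \<in> carrier_mat n n"
    and sym: "\<And>i j. i < n \<Longrightarrow> j < n \<Longrightarrow> M $$ (i, j) = M $$ (j, i)"
  shows "(\<Sum>i<n. cnj (v i) * (\<Sum>j<n. of_real (M $$ (i, j)) * v j))
    = of_real (quad_form M (\<lambda>i. Re (v i)) + quad_form M (\<lambda>i. Im (v i)))"
proof (rule complex_eqI)
  show "Re (\<Sum>i<n. cnj (v i) * (\<Sum>j<n. of_real (M $$ (i, j)) * v j))
      = Re (of_real (quad_form M (\<lambda>i. Re (v i)) + quad_form M (\<lambda>i. Im (v i))))"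
  proof -
    have "Re (\<Sum>i<n. cnj (v i) * (\<Sum>j<n. of_real (M $$ (i, j)) * v j))
        = (\<Sum>i<n. \<Sum>j<n. M $$ (i, j) * Re (v i) * Re (v j) + M $$ (i, j) * Im (v i) * Im (v j))"
      by (simp add: sum_distrib_left algebra_simps)
    then show ?thesis
      using M by (simp add: quad_form_def sum.distrib)
  qed
  have "(\<Sum>i<n. \<Sum>j<n. M $$ (i, j) * Im (v i) * Re (v j))
      = (\<Sum>i<n. \<Sum>j<n. M $$ (i, j) * Re (v i) * Im (v j))"
    by (subst sum.swap) (simp add: sym mult.commute mult.left_commute)
  then show "Im (\<Sum>i<n. cnj (v i) * (\<Sum>j<n. of_real (M $$ (i, j)) * v j))
      = Im (of_real (quad_form M (\<lambda>i. Re (v i)) + quad_form M (\<lambda>i. Im (v i))))"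
    by (simp add: sum_distrib_left sum_subtractf algebra_simps)
qed

lemma real_symmetric_eigenvalue_ge:
  fixes M :: "real mat" and a :: complex
  assumes M: "M \<in> carrier_mat n n"
    and sym: "\<And>i j. i < n \<Longrightarrow> j < n \<Longrightarrow> M $$ (i, j) = M $$ (j, i)"
    and bound: "\<And>x. c * (\<Sum>i<n. (x i)\<^sup>2) \<le> quad_form M x"
    and "eigenvalue (map_mat complex_of_real M) a"
  shows "Im a = 0 \<and> c \<le> Re a"
proof -
  obtain v where v: "v \<in> carrier_vec n" "v \<noteq> 0\<^sub>v n" "map_mat of_real M *\<^sub>v v = a \<cdot>\<^sub>v v"
    using assms(4) M unfolding eigenvalue_def eigenvector_def by auto
  define N where "N = (\<Sum>i<n. (Re (v $ i))\<^sup>2 + (Im (v $ i))\<^sup>2)"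
  have row: "(\<Sum>j<n. of_real (M $$ (i, j)) * v $ j) = a * v $ i" if "i < n" for i
  proof -
    have "(\<Sum>j<n. of_real (M $$ (i, j)) * v $ j) = (map_mat of_real M *\<^sub>v v) $ i"
      using that M v(1) by (auto simp: scalar_prod_def lessThan_atLeast0 intro!: sum.cong)
    then show ?thesis
      using v that by simp
  qed
  have "of_real (quad_form M (\<lambda>i. Re (v $ i)) + quad_form M (\<lambda>i. Im (v $ i)))
      = (\<Sum>i<n. cnj (v $ i) * (\<Sum>j<n. of_real (M $$ (i, j)) * v $ j))"
    by (rule hermitian_form_real_symmetric[OF M sym, symmetric])
  also have "\<dots> = (\<Sum>i<n. cnj (v $ i) * (a * v $ i))"
    by (intro sum.cong refl) (simp add: row)
  also have "\<dots> = a * (\<Sum>i<n. v $ i * cnj (v $ i))"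
    by (simp add: sum_distrib_left mult_ac)
  also have "\<dots> = a * of_real N"
    by (simp add: N_def complex_mult_cnj)
  finally have rayleigh: "of_real (quad_form M (\<lambda>i. Re (v $ i)) + quad_form M (\<lambda>i. Im (v $ i)))
      = a * of_real N" .
  have "0 < N"
  proof -
    obtain i where "i < n" "v $ i \<noteq> 0"
      using v(1,2) by (metis carrier_vecD eq_vecI index_zero_vec(1,2))
    then have "0 < (Re (v $ i))\<^sup>2 + (Im (v $ i))\<^sup>2"
      by (simp add: complex_eq_iff sum_power2_gt_zero_iff)
    also have "\<dots> \<le> N"
      unfolding N_def using \<open>i < n\<close> by (intro member_le_sum) auto
    finally show ?thesis .
  qed
  have "Im a * N = 0"
    using arg_cong[OF rayleigh, of Im] by simp
  then have "Im a = 0"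
    using \<open>0 < N\<close> by simp
  have "c * N \<le> quad_form M (\<lambda>i. Re (v $ i)) + quad_form M (\<lambda>i. Im (v $ i))"
    using bound[of "\<lambda>i. Re (v $ i)"] bound[of "\<lambda>i. Im (v $ i)"]
    by (simp add: N_def sum.distrib distrib_left)
  also have "\<dots> = Re a * N"
    using arg_cong[OF rayleigh, of Re] \<open>Im a = 0\<close> by simp
  finally show ?thesis
    using \<open>0 < N\<close> \<open>Im a = 0\<close> by simp
qed

interpretation of_real_poly_hom: map_poly_inj_idom_hom of_real ..

lemma char_poly_real_symmetric_splits:
  fixes M :: "real mat"
  assumes M: "M \<in> carrier_mat n n"
    and sym: "\<And>i j. i < n \<Longrightarrow> j < n \<Longrightarrow> M $$ (i, j) = M $$ (j, i)"
    and bound: "\<And>x. c * (\<Sum>i<n. (x i)\<^sup>2) \<le> quad_form M x"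
  obtains rs where "char_poly M = (\<Prod>r\<leftarrow>rs. [:- r, 1:])" and "\<forall>r\<in>set rs. c \<le> r"
proof -
  let ?Mc = "map_mat complex_of_real M"
  obtain as where as: "char_poly ?Mc = (\<Prod>a\<leftarrow>as. [:- a, 1:])"
    using char_poly_factorized[of ?Mc n] M by auto
  have real_ge: "Im a = 0 \<and> c \<le> Re a" if "a \<in> set as" for a
  proof -
    have "poly (char_poly ?Mc) a = 0"
      unfolding as using that by (auto simp: poly_prod_list)
    then show ?thesis
      using real_symmetric_eigenvalue_ge[OF M sym bound] eigenvalue_root_char_poly[of ?Mc n] M
      by auto
  qed
  define rs where "rs = map Re as"
  have as_rs: "as = map of_real rs"
    unfolding rs_def using real_ge by (induct as) (auto simp: complex_eq_iff)
  have "map_poly complex_of_real (char_poly M) = char_poly ?Mc"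
    by (rule of_real_hom.char_poly_hom[OF M, symmetric])
  also have "\<dots> = map_poly of_real (\<Prod>r\<leftarrow>rs. [:- r, 1:])"
    unfolding as as_rs by (simp add: of_real_poly_hom.hom_prod_list o_def)
  finally have "char_poly M = (\<Prod>r\<leftarrow>rs. [:- r, 1:])"
    by simp
  moreover have "\<forall>r\<in>set rs. c \<le> r"
    using real_ge unfolding rs_def by auto
  ultimately show ?thesis
    using that by blast
qed

lemma eigs_real_symmetric:
  fixes M :: "real mat"
  assumes M: "M \<in> carrier_mat n n"
    and sym: "\<And>i j. i < n \<Longrightarrow> j < n \<Longrightarrow> M $$ (i, j) = M $$ (j, i)"
    and bound: "\<And>x. c * (\<Sum>i<n. (x i)\<^sup>2) \<le> quad_form M x"
  shows "sorted_wrt (\<ge>) (eigs M)" and "length (eigs M) = n" and "\<forall>r\<in>set (eigs M). c \<le> r"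
    and "det M = prod_list (eigs M)" and "trace_mat M = sum_list (eigs M)"
proof -
  obtain rs where split: "char_poly M = (\<Prod>r\<leftarrow>rs. [:- r, 1:])" and ge: "\<forall>r\<in>set rs. c \<le> r"
    using char_poly_real_symmetric_splits[OF M sym bound] .
  have eigs: "eigs M = rev (sort rs)"
    using eigs_eq_rev_sort[OF M split] .
  have "mset (eigs M) = mset rs"
    by (simp add: eigs)
  then have "prod_list (eigs M) = prod_list rs" "sum_list (eigs M) = sum_list rs"
    by (metis prod_mset_prod_list, metis sum_mset_sum_list)
  then show "det M = prod_list (eigs M)" "trace_mat M = sum_list (eigs M)"
    using det_trace_if_char_poly_splits[OF M split] by simp_all
  show "sorted_wrt (\<ge>) (eigs M)" "\<forall>r\<in>set (eigs M). c \<le> r"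
    using ge by (simp_all add: eigs sorted_wrt_rev)
  show "length (eigs M) = n"
    using degree_monic_char_poly[OF M] degree_linear_factors[of uminus rs] split by (simp add: eigs)
qed

section \<open>The matrix \<open>A_alpha\<close> of a graph\<close>

lemma A_alpha_carrier: "A_alpha a n E \<in> carrier_mat n n"
  unfolding A_alpha_def deg_matrix_def adj_matrix_def by auto

lemma A_alpha_index:
  assumes "i < n" "j < n"
  shows "A_alpha a n E $$ (i, j)
    = a * (if i = j then real (degree n E i) else 0) + (1 - a) * (if E i j then 1 else 0)"
  using assms unfolding A_alpha_def deg_matrix_def adj_matrix_def by auto

lemma A_alpha_symmetric:
  assumes "simple_graph n E" "i < n" "j < n"
  shows "A_alpha a n E $$ (i, j) = A_alpha a n E $$ (j, i)"
  using assms unfolding simple_graph_def by (auto simp: A_alpha_index)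

lemma degree_eq_sum: "real (degree n E i) = (\<Sum>j<n. if E i j then 1 else 0)"
proof -
  have "{j. j < n \<and> E i j} = {..<n} \<inter> {j. E i j}"
    by auto
  then show ?thesis
    unfolding degree_def by (simp add: sum.If_cases)
qed

lemma degree_pos_if_no_isolated:
  assumes "no_isolated n E" "i < n"
  shows "0 < degree n E i"
  using assms unfolding no_isolated_def degree_def by (auto simp: card_gt_0_iff)

lemma quad_form_A_alpha:
  "quad_form (A_alpha a n E) x
    = a * quad_form (deg_matrix n E) x + (1 - a) * quad_form (adj_matrix n E) x"
proof -
  have "quad_form (A_alpha a n E) x
      = (\<Sum>i<n. \<Sum>j<n. a * (deg_matrix n E $$ (i, j) * x i * x j)
          + (1 - a) * (adj_matrix n E $$ (i, j) * x i * x j))"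
    unfolding quad_form_def using A_alpha_carrier[of a n E]
    by (intro sum.cong refl) (auto simp: A_alpha_def deg_matrix_def adj_matrix_def algebra_simps)
  then show ?thesis
    by (simp add: quad_form_def deg_matrix_def adj_matrix_def sum.distrib sum_distrib_left)
qed

lemma quad_form_deg_matrix:
  "quad_form (deg_matrix n E) x = (\<Sum>i<n. real (degree n E i) * (x i)\<^sup>2)"
proof -
  have "quad_form (deg_matrix n E) x
      = (\<Sum>i<n. \<Sum>j<n. if j = i then real (degree n E i) * (x i)\<^sup>2 else 0)"
    unfolding quad_form_def deg_matrix_def
    by (intro sum.cong refl) (auto simp: power2_eq_square)
  then show ?thesis
    by simp
qed

lemma quad_form_adj_matrix:
  "quad_form (adj_matrix n E) x = (\<Sum>i<n. \<Sum>j<n. if E i j then x i * x j else 0)"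
  unfolding quad_form_def adj_matrix_def by (intro sum.cong refl) auto

lemma signless_laplacian_quad_form_nonneg:
  assumes "simple_graph n E"
  shows "0 \<le> quad_form (deg_matrix n E) x + quad_form (adj_matrix n E) x"
proof -
  define e where "e i j = (if E i j then 1 else 0 :: real)" for i j
  define D where "D = (\<Sum>i<n. \<Sum>j<n. e i j * (x i)\<^sup>2)"
  have D: "quad_form (deg_matrix n E) x = D"
    unfolding quad_form_deg_matrix D_def degree_eq_sum e_def by (simp add: sum_distrib_right)
  have D_swap: "(\<Sum>i<n. \<Sum>j<n. e i j * (x j)\<^sup>2) = D"
    unfolding D_def using assms
    by (subst sum.swap) (intro sum.cong refl, auto simp: e_def simple_graph_def)
  have A: "quad_form (adj_matrix n E) x = (\<Sum>i<n. \<Sum>j<n. e i j * x i * x j)"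
    unfolding quad_form_adj_matrix e_def by (intro sum.cong refl) auto
  have "0 \<le> (\<Sum>i<n. \<Sum>j<n. e i j * (x i + x j)\<^sup>2)"
    by (intro sum_nonneg) (simp add: e_def)
  also have "\<dots> = D + 2 * (\<Sum>i<n. \<Sum>j<n. e i j * x i * x j) + (\<Sum>i<n. \<Sum>j<n. e i j * (x j)\<^sup>2)"
    unfolding D_def by (simp add: sum.distrib sum_distrib_left power2_eq_square algebra_simps)
  finally show ?thesis
    unfolding D A D_swap by simp
qed

lemma quad_form_deg_matrix_ge:
  assumes "no_isolated n E"
  shows "(\<Sum>i<n. (x i)\<^sup>2) \<le> quad_form (deg_matrix n E) x"
  unfolding quad_form_deg_matrix
proof (rule sum_mono)
  fix i assume "i \<in> {..<n}"
  then have "1 \<le> real (degree n E i)"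
    using degree_pos_if_no_isolated[OF assms] by (simp add: Suc_le_eq)
  then show "(x i)\<^sup>2 \<le> real (degree n E i) * (x i)\<^sup>2"
    using mult_right_mono[of 1 "real (degree n E i)" "(x i)\<^sup>2"] by simp
qed

lemma quad_form_A_alpha_ge:
  assumes "1/2 \<le> a" "a \<le> 1" "simple_graph n E" "no_isolated n E"
  shows "(2 * a - 1) * (\<Sum>i<n. (x i)\<^sup>2) \<le> quad_form (A_alpha a n E) x"
proof -
  let ?D = "quad_form (deg_matrix n E) x" and ?A = "quad_form (adj_matrix n E) x"
  have "(2 * a - 1) * (\<Sum>i<n. (x i)\<^sup>2) \<le> (2 * a - 1) * ?D"
    using quad_form_deg_matrix_ge[OF assms(4)] assms(1) by (intro mult_left_mono) auto
  also have "\<dots> = a * ?D + (1 - a) * (- ?D)"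
    by (simp add: algebra_simps)
  also have "\<dots> \<le> a * ?D + (1 - a) * ?A"
    using signless_laplacian_quad_form_nonneg[OF assms(3), of x] assms(2) by (intro add_left_mono mult_left_mono) auto
  finally show ?thesis
    by (simp add: quad_form_A_alpha)
qed

lemma sum_degree_eq_twice_num_edges:
  assumes "simple_graph n E"
  shows "(\<Sum>i<n. degree n E i) = 2 * num_edges n E"
proof -
  let ?L = "{(i, j). i < j \<and> j < n \<and> E i j}"
  let ?U = "{(i, j). j < i \<and> i < n \<and> E i j}"
  have finite: "finite ?L" "finite ?U"
    by (rule finite_subset[of _ "{..<n} \<times> {..<n}"], auto)+
  have "(\<Sum>i<n. degree n E i) = card (SIGMA i:{..<n}. {j. j < n \<and> E i j})"
    unfolding degree_def by (subst card_SigmaI) auto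
  also have "(SIGMA i:{..<n}. {j. j < n \<and> E i j}) = ?L \<union> ?U"
    using assms unfolding simple_graph_def by auto (metis nat_neq_iff)
  also have "card (?L \<union> ?U) = card ?L + card ?U"
    by (rule card_Un_disjoint[OF finite]) auto
  also have "card ?U = card ?L"
    by (rule bij_betw_same_card[of "\<lambda>(i, j). (j, i)"])
      (use assms in \<open>auto simp: bij_betw_def inj_on_def image_def simple_graph_def\<close>)
  finally show ?thesis
    unfolding num_edges_def by simp
qed

lemma trace_A_alpha:
  assumes "simple_graph n E"
  shows "trace_mat (A_alpha a n E) = 2 * a * real (num_edges n E)"
proof -
  have "trace_mat (A_alpha a n E) = (\<Sum>i<n. a * real (degree n E i))"
    unfolding trace_mat_def using A_alpha_carrier[of a n E] assms
    by (intro sum.cong) (auto simp: A_alpha_index simple_graph_def)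
  also have "\<dots> = a * real (\<Sum>i<n. degree n E i)"
    by (simp add: sum_distrib_left)
  finally show ?thesis
    by (simp add: sum_degree_eq_twice_num_edges[OF assms])
qed

section \<open>Products and the AM-GM inequality\<close>

lemma prod_le_power_card:
  fixes x :: "'a \<Rightarrow> real"
  assumes "\<And>i. i \<in> S \<Longrightarrow> 0 \<le> x i \<and> x i \<le> c"
  shows "(\<Prod>i\<in>S. x i) \<le> c ^ card S"
  using prod_mono[of S x "\<lambda>_. c"] assms by simp

lemma prod_eq_power_card_iff:
  fixes x :: "'a \<Rightarrow> real"
  assumes "finite S" and bounds: "\<And>i. i \<in> S \<Longrightarrow> 0 < x i \<and> x i \<le> c"
  shows "(\<Prod>i\<in>S. x i) = c ^ card S \<longleftrightarrow> (\<forall>i\<in>S. x i = c)"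
proof
  assume eq: "(\<Prod>i\<in>S. x i) = c ^ card S"
  show "\<forall>i\<in>S. x i = c"
  proof (rule ccontr)
    assume "\<not> (\<forall>i\<in>S. x i = c)"
    then obtain j where j: "j \<in> S" "x j < c"
      using bounds by force
    moreover have "0 < c"
      using j bounds by force
    ultimately have "(\<Prod>i\<in>S. x i) < (\<Prod>i\<in>S. c)"
      using assms by (intro prod_mono_strict[of j]) (auto intro: less_imp_le)
    with eq show False
      by simp
  qed
next
  assume "\<forall>i\<in>S. x i = c"
  then have "(\<Prod>i\<in>S. x i) = (\<Prod>i\<in>S. c)"
    by (intro prod.cong) auto
  then show "(\<Prod>i\<in>S. x i) = c ^ card S"
    by simp
qed

lemma geom_mean_le_arith_mean:
  fixes x :: "'a \<Rightarrow> real"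
  assumes "finite S" "S \<noteq> {}" "\<And>i. i \<in> S \<Longrightarrow> 0 \<le> x i"
  shows "(\<Prod>i\<in>S. x i) powr (1 / card S) \<le> (\<Sum>i\<in>S. x i) / card S"
  using arith_geom_mean[OF assms] by (simp add: sum_divide_distrib)

lemma geom_mean_less_arith_mean:
  fixes x :: "'a \<Rightarrow> real"
  assumes S: "finite S" and pos: "\<And>i. i \<in> S \<Longrightarrow> 0 < x i"
    and ab: "a \<in> S" "b \<in> S" "x a \<noteq> x b"
  shows "(\<Prod>i\<in>S. x i) powr (1 / card S) < (\<Sum>i\<in>S. x i) / card S"
proof -
  define R where "R = S - {a, b}"
  define m where "m = (x a + x b) / 2"
  define y where "y = x(a := m, b := m)"
  have S_eq: "S = insert a (insert b R)" and "a \<notin> insert b R" "b \<notin> R" "finite R"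
    using ab S unfolding R_def by auto
  moreover have y_R: "\<And>i. i \<in> R \<Longrightarrow> y i = x i" and "y a = m" "y b = m"
    unfolding y_def R_def using ab by auto
  ultimately have sum_y: "(\<Sum>i\<in>S. y i) = m + m + (\<Sum>i\<in>R. x i)"
    and prod_y: "(\<Prod>i\<in>S. y i) = m * m * (\<Prod>i\<in>R. x i)"
    and sum_x: "(\<Sum>i\<in>S. x i) = x a + x b + (\<Sum>i\<in>R. x i)"
    and prod_x: "(\<Prod>i\<in>S. x i) = x a * x b * (\<Prod>i\<in>R. x i)"
    by (simp_all cong: sum.cong prod.cong)
  \<comment> \<open>averaging two unequal entries keeps the sum and strictly increases the product\<close>
  have "0 < (x a - x b)\<^sup>2"
    using ab(3) by simp
  then have "x a * x b < m * m"
    unfolding m_def by (simp add: power2_eq_square algebra_simps)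
  moreover have "0 < (\<Prod>i\<in>R. x i)"
    using pos unfolding R_def by (intro prod_pos) auto
  ultimately have "(\<Prod>i\<in>S. x i) < (\<Prod>i\<in>S. y i)"
    unfolding prod_x prod_y by simp
  moreover have "0 < (\<Prod>i\<in>S. x i)"
    using pos by (intro prod_pos) auto
  ultimately have "(\<Prod>i\<in>S. x i) powr (1 / card S) < (\<Prod>i\<in>S. y i) powr (1 / card S)"
    using S ab by (intro powr_less_mono2) (auto simp: card_gt_0_iff)
  also have "\<dots> \<le> (\<Sum>i\<in>S. y i) / card S"
  proof (rule geom_mean_le_arith_mean)
    have "0 < m"
      unfolding m_def using pos[OF ab(1)] pos[OF ab(2)] by simp
    then show "\<And>i. i \<in> S \<Longrightarrow> 0 \<le> y i"
      unfolding y_def using pos by (auto intro: less_imp_le)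
  qed (use S ab in auto)
  also have "(\<Sum>i\<in>S. y i) = (\<Sum>i\<in>S. x i)"
    unfolding sum_x sum_y m_def by simp
  finally show ?thesis .
qed

lemma geom_mean_eq_arith_mean_iff:
  fixes x :: "'a \<Rightarrow> real"
  assumes S: "finite S" and j: "j \<in> S" and pos: "\<And>i. i \<in> S \<Longrightarrow> 0 < x i"
  shows "(\<Prod>i\<in>S. x i) powr (1 / card S) = (\<Sum>i\<in>S. x i) / card S \<longleftrightarrow> (\<forall>i\<in>S. x i = x j)"
proof
  assume "(\<Prod>i\<in>S. x i) powr (1 / card S) = (\<Sum>i\<in>S. x i) / card S"
  then show "\<forall>i\<in>S. x i = x j"
    using geom_mean_less_arith_mean[OF S pos _ j] by force
next
  assume "\<forall>i\<in>S. x i = x j"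
  then have "(\<Prod>i\<in>S. x i) = x j ^ card S" "(\<Sum>i\<in>S. x i) = card S * x j"
    by simp_all
  moreover have "0 < card S" "0 < x j"
    using S j pos by (auto simp: card_gt_0_iff)
  ultimately show "(\<Prod>i\<in>S. x i) powr (1 / card S) = (\<Sum>i\<in>S. x i) / card S"
    by (simp add: powr_realpow[symmetric] powr_powr)
qed

section \<open>Partial sums of a non-increasing positive sequence\<close>

(* Indices are 0-based: ls ! 0 and ls ! 1 play the roles of lambda_1 and lambda_2. *)
lemma sorted_prod_div_le_tail_prod:
  fixes ls :: "real list"
  assumes sorted: "sorted_wrt (\<ge>) ls" and pos: "\<forall>r\<in>set ls. 0 < r"
    and k: "1 \<le> k" "k < length ls"
  shows "0 < prod_list ls / (ls ! 0 * (ls ! 1) ^ (k - 1))"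
    and "prod_list ls / (ls ! 0 * (ls ! 1) ^ (k - 1)) \<le> (\<Prod>i\<in>{k..<length ls}. ls ! i)"
    and "prod_list ls / (ls ! 0 * (ls ! 1) ^ (k - 1)) = (\<Prod>i\<in>{k..<length ls}. ls ! i)
      \<longleftrightarrow> (\<forall>i. 1 \<le> i \<and> i < k \<longrightarrow> ls ! i = ls ! 1)"
proof -
  define R where "R = (\<Prod>i\<in>{1..<k}. ls ! i)"
  define P where "P = (\<Prod>i\<in>{k..<length ls}. ls ! i)"
  define c where "c = (ls ! 1) ^ (k - 1)"
  have nth_pos: "0 < ls ! i" if "i < length ls" for i
    using pos that by simp
  have head: "0 < ls ! i \<and> ls ! i \<le> ls ! 1" if "i \<in> {1..<k}" for i
    using that k nth_pos sorted_wrt_nth_less[OF sorted, of 1 i] by (cases "i = 1") auto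
  have "prod_list ls = ls ! 0 * R * P"
    using k prod.atLeastLessThan_concat[of 1 k "length ls" "(!) ls"]
      prod.atLeast_Suc_lessThan[of 0 "length ls" "(!) ls"]
    by (simp add: R_def P_def prod.list_conv_set_nth mult.assoc flip: length_greater_0_conv)
  moreover have "ls ! 0 \<noteq> 0"
    using nth_pos[of 0] k by force
  ultimately have G: "prod_list ls / (ls ! 0 * c) = R / c * P"
    by simp
  have "0 < R" "0 < P" "0 < c"
    using head nth_pos k unfolding R_def P_def c_def by (auto intro!: prod_pos)
  then show "0 < prod_list ls / (ls ! 0 * (ls ! 1) ^ (k - 1))"
    unfolding c_def[symmetric] G by simp
  have "R \<le> c"
    using prod_le_power_card[of "{1..<k}" "(!) ls" "ls ! 1"] head
    unfolding R_def c_def by (simp add: less_imp_le)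
  then have "R / c * P \<le> 1 * P"
    using \<open>0 < c\<close> \<open>0 < P\<close> by (intro mult_right_mono) auto
  then show "prod_list ls / (ls ! 0 * (ls ! 1) ^ (k - 1)) \<le> (\<Prod>i\<in>{k..<length ls}. ls ! i)"
    unfolding c_def[symmetric] P_def[symmetric] G by simp
  have "R / c * P = P \<longleftrightarrow> R = c"
    using \<open>0 < c\<close> \<open>0 < P\<close> by (auto simp: field_simps)
  also have "\<dots> \<longleftrightarrow> (\<forall>i\<in>{1..<k}. ls ! i = ls ! 1)"
    using prod_eq_power_card_iff[of "{1..<k}" "(!) ls" "ls ! 1"] head unfolding R_def c_def by simp
  finally show "prod_list ls / (ls ! 0 * (ls ! 1) ^ (k - 1)) = (\<Prod>i\<in>{k..<length ls}. ls ! i)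
      \<longleftrightarrow> (\<forall>i. 1 \<le> i \<and> i < k \<longrightarrow> ls ! i = ls ! 1)"
    unfolding c_def[symmetric] P_def[symmetric] G by (simp add: Ball_def)
qed

lemma sorted_pos_sum_take_bound:
  fixes ls :: "real list"
  assumes sorted: "sorted_wrt (\<ge>) ls" and pos: "\<forall>r\<in>set ls. 0 < r"
    and k: "1 \<le> k" "k < length ls"
  defines "N \<equiv> real (length ls - k)"
  defines "G \<equiv> prod_list ls / (ls ! 0 * (ls ! 1) ^ (k - 1))"
  shows "sum_list (take k ls) \<le> sum_list ls - N * G powr (1 / N)
    \<and> (sum_list (take k ls) = sum_list ls - N * G powr (1 / N)
       \<longleftrightarrow> (\<forall>i. 1 \<le> i \<and> i < k \<longrightarrow> ls ! i = ls ! 1)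
         \<and> (\<forall>i. k \<le> i \<and> i < length ls \<longrightarrow> ls ! i = ls ! k))"
proof -
  let ?S = "{k..<length ls}"
  define P where "P = (\<Prod>i\<in>?S. ls ! i)"
  define T where "T = (\<Sum>i\<in>?S. ls ! i)"
  have N_pos: "0 < N" and N_card: "N = real (card ?S)"
    using k unfolding N_def by auto
  have sum_eq: "sum_list ls = sum_list (take k ls) + T"
    using k sum.atLeastLessThan_concat[of 0 k "length ls" "(!) ls"]
    by (simp add: T_def sum_list_sum_nth min_def)
  have "0 < G" "G \<le> P" and head_eq: "G = P \<longleftrightarrow> (\<forall>i. 1 \<le> i \<and> i < k \<longrightarrow> ls ! i = ls ! 1)"
    using sorted_prod_div_le_tail_prod[OF sorted pos k] unfolding G_def P_def by auto
  have tail_pos: "\<And>i. i \<in> ?S \<Longrightarrow> 0 < ls ! i"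
    using pos by auto
  have GP: "G powr (1 / N) \<le> P powr (1 / N)"
    using \<open>0 < G\<close> \<open>G \<le> P\<close> N_pos by (intro powr_mono2) auto
  have GP_eq: "G powr (1 / N) = P powr (1 / N) \<longleftrightarrow> G = P"
    using \<open>0 < G\<close> \<open>G \<le> P\<close> N_pos by (auto dest: arg_cong[where f = "\<lambda>t. t powr N"] simp: powr_powr)
  have PT: "P powr (1 / N) \<le> T / N"
    unfolding P_def T_def N_card using k tail_pos
    by (intro geom_mean_le_arith_mean) (auto intro: less_imp_le)
  have PT_eq: "P powr (1 / N) = T / N \<longleftrightarrow> (\<forall>i\<in>?S. ls ! i = ls ! k)"
    unfolding P_def T_def N_card using k tail_pos by (intro geom_mean_eq_arith_mean_iff) auto
  have le: "N * G powr (1 / N) \<le> N * P powr (1 / N)" "N * P powr (1 / N) \<le> T"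
    using GP PT N_pos by (simp_all add: pos_le_divide_eq mult.commute)
  have eq_head: "N * G powr (1 / N) = N * P powr (1 / N) \<longleftrightarrow> G = P"
    using GP_eq N_pos by simp
  have "N * P powr (1 / N) = T \<longleftrightarrow> P powr (1 / N) = T / N"
    using N_pos by (auto simp: eq_divide_eq mult.commute)
  also have "\<dots> \<longleftrightarrow> (\<forall>i\<in>?S. ls ! i = ls ! k)"
    by (rule PT_eq)
  also have "\<dots> \<longleftrightarrow> (\<forall>i. k \<le> i \<and> i < length ls \<longrightarrow> ls ! i = ls ! k)"
    by (simp add: Ball_def)
  finally have eq_tail: "N * P powr (1 / N) = T \<longleftrightarrow> (\<forall>i. k \<le> i \<and> i < length ls \<longrightarrow> ls ! i = ls ! k)" .
  have "N * G powr (1 / N) = T \<longleftrightarrow> G = P \<and> (\<forall>i. k \<le> i \<and> i < length ls \<longrightarrow> ls ! i = ls ! k)"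
    using le eq_head eq_tail by (auto dest: antisym)
  then show ?thesis
    using le sum_eq head_eq by auto
qed

theorem theorem3p3:
  fixes \<alpha> :: real and n k :: nat and E :: "nat \<Rightarrow> nat \<Rightarrow> bool"
  assumes "1/2 < \<alpha>" and "\<alpha> < 1"
    and "simple_graph n E" and "no_isolated n E"
    and "1 \<le> k" and "k \<le> n - 1"
  shows "S_k k (A_alpha \<alpha> n E) \<le> 2 * \<alpha> * real (num_edges n E)
           - real (n - k) * (det (A_alpha \<alpha> n E) /
               (eigs (A_alpha \<alpha> n E) ! 0 * (eigs (A_alpha \<alpha> n E) ! 1) ^ (k - 1)))
             powr (1 / real (n - k))
         \<and> (S_k k (A_alpha \<alpha> n E) = 2 * \<alpha> * real (num_edges n E)
           - real (n - k) * (det (A_alpha \<alpha> n E) /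
               (eigs (A_alpha \<alpha> n E) ! 0 * (eigs (A_alpha \<alpha> n E) ! 1) ^ (k - 1)))
             powr (1 / real (n - k))
         \<longleftrightarrow> (\<forall>i. 1 \<le> i \<and> i < k \<longrightarrow> eigs (A_alpha \<alpha> n E) ! i = eigs (A_alpha \<alpha> n E) ! 1)
           \<and> (\<forall>i. k \<le> i \<and> i < n \<longrightarrow> eigs (A_alpha \<alpha> n E) ! i = eigs (A_alpha \<alpha> n E) ! k))"
proof -
  let ?M = "A_alpha \<alpha> n E"
  have bound: "(2 * \<alpha> - 1) * (\<Sum>i<n. (x i)\<^sup>2) \<le> quad_form ?M x" for x
    using assms(1-4) by (intro quad_form_A_alpha_ge) auto
  note eigs = eigs_real_symmetric[OF A_alpha_carrier A_alpha_symmetric[OF assms(3)] bound]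
  have pos: "\<forall>r\<in>set (eigs ?M). 0 < r"
    using eigs(3) assms(1) by fastforce
  have k: "1 \<le> k" "k < length (eigs ?M)"
    using eigs(2) assms(5,6) by auto
  show ?thesis
    using sorted_pos_sum_take_bound[OF eigs(1) pos k] eigs(2)
    by (simp add: S_k_def eigs(4,5) flip: trace_A_alpha[OF assms(3)])
qed

end
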